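(* Let $H$ be a real Hilbert space, $C\subset H$ nonempty closed convex, and $A,F:H\to H$ such that: (A1) $A$ is $\lambda$-strongly monotone and $L_A$-Lipschitz continuous, $F$ is $L_F$-Lipschitz continuous, and $A$, $F$ are sequentially weak-to-weak continuous; (A2) the couple $(A,F)$ is monotone; (A3) the solution set $\mathrm{Sol}(A,F,C)$ of $\mathrm{GVI}(A,F,C)$ is nonempty and $\mathcal C:=A(\mathrm{Sol}(A,F,C))$ is convex. Let $\mathcal A:=A^{-1}$, let $u^\dagger$ be the unique solution of the problem: find $u\in\mathcal C$ with $\langle\mathcal Au,v-u\rangle\ge0$ for all $v\in\mathcal C$, and let $x^\dagger:=\mathcal Au^\dagger$. For $\alpha>0$ let $F_\alpha:=F+\alpha I$ and let $x_\alpha$ be the unique solution of $\mathrm{GVI}(A,F_\alpha,C)$. Then: (i) the net $\{x_\alpha\}_{\alpha>0}$ is bounded on $(0,\infty)$; (ii) $x_\alpha\to x^\dagger$ (in norm) as $\alpha\to0$, and $x^\dagger\in\mathrm{Sol}(A,F,C)$; (iii) there exists $M>0$ such that $\|x_\alpha-x_\beta\|\le \dfrac{M|\alpha-\beta|}{\beta}$ for all $\alpha,\beta>0$.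
   Context: $\mathrm{GVI}(A,F,C)$: find $x^*\in H$ with $Fx^*\in C$ and $\langle Ax^*,y-Fx^*\rangle\ge0$ for all $y\in C$; its solution set is $\mathrm{Sol}(A,F,C)$. The couple $(A,F)$ is monotone if $\langle Ax-Ay,Fx-Fy\rangle\ge0$ for all $x,y\in H$. An operator is sequentially weak-to-weak continuous if $x^k\rightharpoonup\bar x$ implies $Ax^k\rightharpoonup A\bar x$. Under these assumptions $A$ is invertible, $\mathcal A=A^{-1}$ is Lipschitz and strongly monotone, so $u^\dagger$ exists and is unique; and for each $\alpha>0$ the couple $(A,F_\alpha)$ is $\alpha\lambda$-strongly monotone, so $x_\alpha$ exists and is unique. *)

theory Defs
  imports "HOL-Analysis.Analysis"
begin

definition weak_conv :: "(nat \<Rightarrow> 'a::real_inner) \<Rightarrow> 'a \<Rightarrow> bool" where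
  "weak_conv xs x \<longleftrightarrow> (\<forall>y. ((\<lambda>k. inner (xs k) y) \<longlongrightarrow> inner x y) sequentially)"

definition seq_weak_weak_cont :: "('a::real_inner \<Rightarrow> 'b::real_inner) \<Rightarrow> bool" where
  "seq_weak_weak_cont A \<longleftrightarrow> (\<forall>xs x. weak_conv xs x \<longrightarrow> weak_conv (\<lambda>k. A (xs k)) (A x))"

definition strongly_monotone :: "real \<Rightarrow> ('a::real_inner \<Rightarrow> 'a) \<Rightarrow> bool" where
  "strongly_monotone l A \<longleftrightarrow> l > 0 \<and> (\<forall>x y. inner (A x - A y) (x - y) \<ge> l * (norm (x - y))\<^sup>2)"

definition couple_monotone :: "('a::real_inner \<Rightarrow> 'a) \<Rightarrow> ('a \<Rightarrow> 'a) \<Rightarrow> bool" where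
  "couple_monotone A F \<longleftrightarrow> (\<forall>x y. inner (A x - A y) (F x - F y) \<ge> 0)"

definition Sol :: "('a::real_inner \<Rightarrow> 'a) \<Rightarrow> ('a \<Rightarrow> 'a) \<Rightarrow> 'a set \<Rightarrow> 'a set" where
  "Sol A F C = {x. F x \<in> C \<and> (\<forall>y\<in>C. inner (A x) (y - F x) \<ge> 0)}"

end

theory Submission
  imports Defs "HOL-Library.Diagonal_Subsequence"
begin

text \<open>
  Testing the variational inequalities of \<open>x\<^sub>\<alpha>\<close> and \<open>x\<^sub>\<beta>\<close> against each other and using the
  monotonicity of the couple \<open>(A, F)\<close> gives
  \<open>\<alpha> \<langle>A x\<^sub>\<alpha> - A x\<^sub>\<beta>, x\<^sub>\<alpha>\<rangle> \<le> \<beta> \<langle>A x\<^sub>\<alpha> - A x\<^sub>\<beta>, x\<^sub>\<beta>\<rangle>\<close> for all \<open>\<alpha>, \<beta> \<ge> 0\<close>, where \<open>\<beta> = 0\<close>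
  stands for any solution of the unregularized problem. Together with strong monotonicity and
  the Lipschitz continuity of \<open>A\<close> this gives the bound (i) and the estimate (iii).

  For (ii), a bounded sequence \<open>x\<^sub>\<alpha>\<^sub>k\<close> with \<open>\<alpha>\<^sub>k \<rightarrow> 0\<close> has a weakly convergent subsequence.
  By weak-to-weak continuity and Minty's trick its weak limit \<open>x\<close> solves \<open>GVI(A, F, C)\<close>, and then
  \<open>\<lambda> \<parallel>x\<^sub>\<alpha>\<^sub>k - x\<^sup>\<dagger>\<parallel>\<^sup>2 \<le> \<langle>A x\<^sup>\<dagger> - A x\<^sub>\<alpha>\<^sub>k, x\<^sup>\<dagger>\<rangle> \<rightarrow> \<langle>A x\<^sup>\<dagger> - A x, x\<^sup>\<dagger>\<rangle> \<le> 0\<close> by the variational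
  inequality defining \<open>u\<^sup>\<dagger> = A x\<^sup>\<dagger>\<close>, so the convergence is strong.

  Weak sequential compactness of bounded sets is proved directly: a diagonal subsequence \<open>z\<close>
  makes \<open>\<langle>z\<^sub>j, y\<rangle>\<close> converge for all \<open>y\<close> in a closed subspace \<open>V\<close> containing every \<open>z\<^sub>j\<close>; a point
  common to the closed convex hulls of all tails of \<open>z\<close> is the weak limit on \<open>V\<close>, and orthogonal
  projection onto \<open>V\<close> handles the remaining \<open>y\<close>.
\<close>

lemma norm_diff_sq_midpoint:
  fixes y a b :: "'a::real_inner"
  shows "(norm (a - b))\<^sup>2 =
    2 * (norm (y - a))\<^sup>2 + 2 * (norm (y - b))\<^sup>2 - 4 * (norm (y - midpoint a b))\<^sup>2"
  unfolding power2_norm_eq_inner midpoint_def by (simp add: inner_simps algebra_simps)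

lemma closed_convex_nearest_point_exists:
  fixes K :: "'a::{real_inner,complete_space} set"
  assumes "closed K" "convex K" "K \<noteq> {}"
  obtains p where "p \<in> K" "\<And>z. z \<in> K \<Longrightarrow> dist y p \<le> dist y z"
proof -
  define d where "d = infdist y K"
  have d_le: "d \<le> dist y z" if "z \<in> K" for z
    unfolding d_def using that by (rule infdist_le)
  have "\<exists>k\<in>K. dist y k < d + inverse (Suc n)" for n
  proof -
    have "(INF z\<in>K. dist y z) < d + inverse (Suc n)"
      using infdist_notempty[OF \<open>K \<noteq> {}\<close>] by (simp add: d_def)
    then show ?thesis
      using \<open>K \<noteq> {}\<close> by (subst (asm) cINF_less_iff) (auto intro: bdd_belowI2[where m=0])
  qed
  then obtain k where kK: "\<And>n. k n \<in> K" and k_near: "\<And>n. dist y (k n) < d + inverse (Suc n)"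
    by metis
  have "(\<lambda>n. dist y (k n)) \<longlonglongrightarrow> d"
  proof (rule tendsto_sandwich[OF _ _ tendsto_const])
    show "\<forall>\<^sub>F n in sequentially. d \<le> dist y (k n)" using d_le kK by simp
    show "\<forall>\<^sub>F n in sequentially. dist y (k n) \<le> d + inverse (Suc n)"
      using k_near by (simp add: less_imp_le)
    show "(\<lambda>n. d + inverse (real (Suc n))) \<longlonglongrightarrow> d"
      using tendsto_add[OF tendsto_const LIMSEQ_inverse_real_of_nat] by simp
  qed
  then have dist_k_lim: "(\<lambda>n. (dist y (k n))\<^sup>2) \<longlonglongrightarrow> d\<^sup>2"
    by (intro tendsto_intros)
  define \<delta> where "\<delta> n = (dist y (k n))\<^sup>2 - d\<^sup>2" for n
  have d_nonneg: "0 \<le> d" unfolding d_def by (rule infdist_nonneg)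
  have \<delta>_nonneg: "0 \<le> \<delta> n" for n
    unfolding \<delta>_def using power_mono[OF d_le[OF kK] d_nonneg, of 2] by simp
  have \<delta>_lim: "\<delta> \<longlonglongrightarrow> 0"
    unfolding \<delta>_def using tendsto_diff[OF dist_k_lim tendsto_const[of "d\<^sup>2"]] by simp
  have k_close: "(dist (k m) (k n))\<^sup>2 \<le> 2 * \<delta> m + 2 * \<delta> n" for m n
  proof -
    have "midpoint (k m) (k n) \<in> K"
      using convexD[OF \<open>convex K\<close> kK kK, of "1/2" "1/2"]
      by (simp add: midpoint_def scaleR_add_right)
    then have "d\<^sup>2 \<le> (norm (y - midpoint (k m) (k n)))\<^sup>2"
      using power_mono[OF d_le d_nonneg, of _ 2] by (simp add: dist_norm)
    then show ?thesis
      using norm_diff_sq_midpoint[of "k m" "k n" y] by (simp add: \<delta>_def dist_norm)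
  qed
  have "Cauchy k"
    unfolding Cauchy_altdef2
  proof (intro allI impI)
    fix e :: real assume "e > 0"
    then obtain N where N: "\<And>n. n \<ge> N \<Longrightarrow> \<delta> n < e\<^sup>2 / 4"
      using order_tendstoD(2)[OF \<delta>_lim, of "e\<^sup>2 / 4"] \<open>e > 0\<close>
      by (auto simp: eventually_sequentially)
    have "dist (k n) (k N) < e" if "n \<ge> N" for n
    proof (rule power2_less_imp_less)
      show "(dist (k n) (k N))\<^sup>2 < e\<^sup>2"
        using k_close[of n N] N[OF that] N[of N] by linarith
    qed (use \<open>e > 0\<close> in simp)
    then show "\<exists>N. \<forall>n\<ge>N. dist (k n) (k N) < e" by blast
  qed
  then obtain p where "k \<longlonglongrightarrow> p"
    using Cauchy_convergent_iff convergent_def by blast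
  moreover have "p \<in> K"
    using closed_sequentially[OF \<open>closed K\<close> _ \<open>k \<longlonglongrightarrow> p\<close>] kK by blast
  moreover have "dist y p = d"
    using tendsto_unique[OF _ tendsto_dist[OF tendsto_const \<open>k \<longlonglongrightarrow> p\<close>] \<open>(\<lambda>n. dist y (k n)) \<longlonglongrightarrow> d\<close>]
    by simp
  ultimately show ?thesis using that d_le by blast
qed

lemma closed_convex_projection_exists:
  fixes K :: "'a::{real_inner,complete_space} set"
  assumes "closed K" "convex K" "K \<noteq> {}"
  obtains p where "p \<in> K" "\<And>z. z \<in> K \<Longrightarrow> inner (y - p) (z - p) \<le> 0"
proof -
  obtain p where "p \<in> K" "\<And>z. z \<in> K \<Longrightarrow> dist y p \<le> dist y z"
    using closed_convex_nearest_point_exists[OF assms] by blast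
  then show ?thesis
    using that any_closest_point_dot[OF \<open>convex K\<close> \<open>closed K\<close>] by blast
qed

lemma closed_subspace_orthogonal_decomposition:
  fixes V :: "'a::{real_inner,complete_space} set"
  assumes "subspace V" "closed V"
  obtains q where "q \<in> V" "\<And>v. v \<in> V \<Longrightarrow> inner (y - q) v = 0"
proof -
  have "V \<noteq> {}" using subspace_0[OF \<open>subspace V\<close>] by blast
  then obtain q where q: "q \<in> V" "\<And>z. z \<in> V \<Longrightarrow> inner (y - q) (z - q) \<le> 0"
    using closed_convex_projection_exists[OF \<open>closed V\<close> subspace_imp_convex[OF \<open>subspace V\<close>]]
    by blast
  have "inner (y - q) v = 0" if "v \<in> V" for v
    using q(2)[OF subspace_add[OF \<open>subspace V\<close> q(1) that]]
      q(2)[OF subspace_diff[OF \<open>subspace V\<close> q(1) that]]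
    by (simp add: inner_diff_right)
  with q(1) show ?thesis using that by blast
qed

lemma decseq_closed_convex_Inter_nonempty:
  fixes K :: "nat \<Rightarrow> 'a::{real_inner,complete_space} set"
  assumes "decseq K" "\<And>n. closed (K n)" "\<And>n. convex (K n)" "\<And>n. K n \<noteq> {}"
    and "bounded (K 0)"
  shows "(\<Inter>n. K n) \<noteq> {}"
proof -
  \<comment> \<open>for the points of least norm \<open>p n \<in> K n\<close>, nestedness gives
    \<open>\<parallel>p m - p n\<parallel>\<^sup>2 \<le> \<parallel>p m\<parallel>\<^sup>2 - \<parallel>p n\<parallel>\<^sup>2\<close> for \<open>m \<ge> n\<close>: their norms increase and they form a Cauchy sequence\<close>
  have "\<exists>p\<in>K n. \<forall>w\<in>K n. 0 \<le> inner p (w - p)" for n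
    using closed_convex_projection_exists[OF assms(2-4), of n 0]
    by (metis diff_0 inner_minus_left neg_le_0_iff_le)
  then obtain p where pK: "\<And>n. p n \<in> K n"
    and p_min: "\<And>n w. w \<in> K n \<Longrightarrow> 0 \<le> inner (p n) (w - p n)"
    by metis
  have p_diff: "(norm (p m - p n))\<^sup>2 \<le> (norm (p m))\<^sup>2 - (norm (p n))\<^sup>2" if "n \<le> m" for m n
    using p_min[of "p m" n] pK[of m] \<open>decseq K\<close> that unfolding power2_norm_eq_inner
    by (auto simp: decseq_def inner_diff_left inner_diff_right inner_commute)
  have "incseq (\<lambda>n. (norm (p n))\<^sup>2)"
  proof (rule incseq_SucI)
    fix n show "(norm (p n))\<^sup>2 \<le> (norm (p (Suc n)))\<^sup>2"
      using p_diff[of n "Suc n"] zero_le_power2[of "norm (p (Suc n) - p n)"] by linarith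
  qed
  moreover obtain B where B: "\<And>v. v \<in> K 0 \<Longrightarrow> norm v \<le> B"
    using \<open>bounded (K 0)\<close> unfolding bounded_iff by blast
  have "K n \<subseteq> K 0" for n using \<open>decseq K\<close> by (simp add: decseq_def)
  then have "norm (p n) \<le> B" for n using B pK by blast
  ultimately obtain l where l: "(\<lambda>n. (norm (p n))\<^sup>2) \<longlonglongrightarrow> l" "\<And>n. (norm (p n))\<^sup>2 \<le> l"
    using incseq_convergent[of "\<lambda>n. (norm (p n))\<^sup>2" "B\<^sup>2"]
    by (metis norm_ge_zero power_mono)
  have "Cauchy p"
    unfolding Cauchy_altdef2
  proof (intro allI impI)
    fix e :: real assume "e > 0"
    then obtain N where "l - e\<^sup>2 < (norm (p N))\<^sup>2"
      using order_tendstoD(1)[OF l(1), of "l - e\<^sup>2"] by (auto simp: eventually_sequentially)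
    have "dist (p n) (p N) < e" if "n \<ge> N" for n
    proof (rule power2_less_imp_less)
      show "(dist (p n) (p N))\<^sup>2 < e\<^sup>2"
        unfolding dist_norm using p_diff[OF that] l(2)[of n] \<open>l - e\<^sup>2 < (norm (p N))\<^sup>2\<close> by linarith
    qed (use \<open>e > 0\<close> in simp)
    then show "\<exists>N. \<forall>n\<ge>N. dist (p n) (p N) < e" by blast
  qed
  then obtain q where "p \<longlonglongrightarrow> q"
    using Cauchy_convergent_iff convergent_def by blast
  have "q \<in> K n" for n
  proof -
    have "p (j + n) \<in> K n" for j
      using pK[of "j + n"] decseqD[OF \<open>decseq K\<close>, of n "j + n"] by auto
    then show ?thesis
      by (rule closed_sequentially[OF assms(2) _ LIMSEQ_ignore_initial_segment[OF \<open>p \<longlonglongrightarrow> q\<close>]])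
  qed
  then show ?thesis by blast
qed

lemma tail_hulls_Inter_nonempty:
  fixes z :: "nat \<Rightarrow> 'a::{real_inner,complete_space}"
  assumes "bounded (range z)"
  obtains p where "\<And>n. p \<in> closure (convex hull (z ` {n..}))"
proof -
  have "(\<Inter>n. closure (convex hull (z ` {n..}))) \<noteq> {}"
  proof (rule decseq_closed_convex_Inter_nonempty)
    show "decseq (\<lambda>n. closure (convex hull (z ` {n..})))"
      by (intro decseq_SucI closure_mono hull_mono image_mono) auto
    show "bounded (closure (convex hull (z ` {0..})))"
      using assms by (simp add: bounded_closure bounded_convex_hull)
  qed auto
  then show ?thesis using that by blast
qed

lemma inner_eq_lim_if_in_tail_hulls:
  fixes z :: "nat \<Rightarrow> 'a::real_inner"
  assumes lim: "(\<lambda>j. inner (z j) y) \<longlonglongrightarrow> l"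
    and p: "\<And>n. p \<in> closure (convex hull (z ` {n..}))"
  shows "inner p y = l"
proof -
  have "\<bar>inner p y - l\<bar> \<le> e" if "e > 0" for e
  proof -
    define H where "H = {w. inner y w \<le> l + e} \<inter> {w. inner y w \<ge> l - e}"
    obtain N where "\<And>j. j \<ge> N \<Longrightarrow> \<bar>inner (z j) y - l\<bar> < e"
      using lim \<open>e > 0\<close> unfolding lim_sequentially dist_real_def by blast
    then have "z ` {N..} \<subseteq> H" by (fastforce simp: H_def inner_commute abs_less_iff)
    moreover have "closed H" "convex H"
      unfolding H_def
      by (intro closed_Int convex_Int closed_halfspace_le closed_halfspace_ge
          convex_halfspace_le convex_halfspace_ge)+
    ultimately have "closure (convex hull (z ` {N..})) \<subseteq> H"
      by (intro closure_minimal hull_minimal)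
    then show ?thesis using p[of N] by (force simp: H_def inner_commute abs_le_iff)
  qed
  then show ?thesis using dense_eq0_I[of "inner p y - l"] by simp
qed

lemma subspace_inner_convergent: "subspace {y. convergent (\<lambda>j. inner (z j) y)}"
  unfolding subspace_def
  by (simp add: convergent_const inner_add_right convergent_add convergent_mult)

lemma closed_inner_convergent:
  fixes z :: "nat \<Rightarrow> 'a::real_inner"
  assumes "bounded (range z)"
  shows "closed {y. convergent (\<lambda>j. inner (z j) y)}"
  unfolding closure_subset_eq[symmetric]
proof
  fix y assume y: "y \<in> closure {y. convergent (\<lambda>j. inner (z j) y)}"
  obtain R where R: "R > 0" "\<And>j. norm (z j) \<le> R"
    using assms unfolding bounded_pos by auto
  have "Cauchy (\<lambda>j. inner (z j) y)"
  proof (rule metric_CauchyI)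
    fix e :: real assume "e > 0"
    then have "e / (3 * R) > 0" using R(1) by simp
    then obtain y' where y'_conv: "convergent (\<lambda>j. inner (z j) y')"
      and y': "dist y' y < e / (3 * R)"
      using y unfolding closure_approachable by blast
    from y'_conv have y'_Cauchy: "Cauchy (\<lambda>j. inner (z j) y')" by (rule convergent_Cauchy)
    obtain N where N: "\<And>m n. m \<ge> N \<Longrightarrow> n \<ge> N \<Longrightarrow> dist (inner (z m) y') (inner (z n) y') < e / 3"
      using metric_CauchyD[OF y'_Cauchy, of "e / 3"] \<open>e > 0\<close> by auto
    have close: "\<bar>inner (z j) y - inner (z j) y'\<bar> < e / 3" for j
    proof -
      have "\<bar>inner (z j) y - inner (z j) y'\<bar> = \<bar>inner (z j) (y - y')\<bar>"
        by (simp add: inner_diff_right)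
      also have "\<dots> \<le> norm (z j) * norm (y - y')" by (rule Cauchy_Schwarz_ineq2)
      also have "\<dots> \<le> R * norm (y - y')" by (rule mult_right_mono[OF R(2) norm_ge_zero])
      also have "\<dots> < R * (e / (3 * R))"
        using mult_strict_left_mono[OF y' R(1)] by (simp add: dist_norm norm_minus_commute)
      also have "\<dots> = e / 3" using R(1) by simp
      finally show ?thesis .
    qed
    have "dist (inner (z m) y) (inner (z n) y) < e" if "m \<ge> N" "n \<ge> N" for m n
      using N[OF that] close[of m] close[of n] unfolding dist_real_def abs_less_iff by linarith
    then show "\<exists>M. \<forall>m\<ge>M. \<forall>n\<ge>M. dist (inner (z m) y) (inner (z n) y) < e" by blast
  qed
  then show "y \<in> {y. convergent (\<lambda>j. inner (z j) y)}"
    by (simp add: Cauchy_convergent_iff)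
qed

lemma weak_conv_closed_convex:
  fixes C :: "'a::{real_inner,complete_space} set"
  assumes "closed C" "convex C" "\<And>k. w k \<in> C" "weak_conv w v"
  shows "v \<in> C"
proof -
  obtain c where c: "c \<in> C" "\<And>z. z \<in> C \<Longrightarrow> inner (v - c) (z - c) \<le> 0"
    using closed_convex_projection_exists[OF assms(1,2), of v] assms(3) by blast
  have "(\<lambda>k. inner (w k) (v - c) - inner c (v - c)) \<longlonglongrightarrow> inner v (v - c) - inner c (v - c)"
    using \<open>weak_conv w v\<close> unfolding weak_conv_def by (intro tendsto_diff tendsto_const) auto
  moreover have "inner (w k) (v - c) - inner c (v - c) \<le> 0" for k
    using c(2)[OF assms(3)[of k]] by (metis inner_commute inner_diff_left)
  ultimately have "inner v (v - c) - inner c (v - c) \<le> 0"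
    by (intro LIMSEQ_le_const2) auto
  then have "inner (v - c) (v - c) \<le> 0" by (simp add: inner_diff_left)
  then have "v = c" by (metis inner_eq_zero_iff inner_ge_zero order_antisym right_minus_eq)
  then show ?thesis using c(1) by simp
qed

lemma weak_conv_add_null:
  assumes "weak_conv xs x" "ys \<longlonglongrightarrow> 0"
  shows "weak_conv (\<lambda>k. xs k + ys k) x"
  unfolding weak_conv_def
proof
  fix y
  have "(\<lambda>k. inner (xs k) y) \<longlonglongrightarrow> inner x y"
    using assms(1) by (simp add: weak_conv_def)
  moreover have "(\<lambda>k. inner (ys k) y) \<longlonglongrightarrow> inner 0 y"
    using assms(2) by (intro tendsto_inner tendsto_const)
  ultimately have "(\<lambda>k. inner (xs k) y + inner (ys k) y) \<longlonglongrightarrow> inner x y + inner 0 y"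
    by (rule tendsto_add)
  then show "(\<lambda>k. inner (xs k + ys k) y) \<longlonglongrightarrow> inner x y" by (simp add: inner_add_left)
qed

lemma bounded_seq_diagonal_inner_convergent:
  fixes x :: "nat \<Rightarrow> 'a::real_inner"
  assumes "bounded (range x)"
  obtains \<sigma> where "strict_mono \<sigma>" "\<And>m. convergent (\<lambda>j. inner (x (\<sigma> j)) (x m))"
proof -
  interpret subseqs "\<lambda>m s. convergent (\<lambda>j. inner (x (s j)) (x m))"
  proof
    fix m and s :: "nat \<Rightarrow> nat"
    have "bounded ((\<lambda>v. inner v (x m)) ` range x)"
      using assms by (intro bounded_linear_image bounded_linear_inner_left)
    then have "bounded (range (\<lambda>j. inner (x (s j)) (x m)))"
      by (rule bounded_subset) auto
    then obtain l r where "strict_mono r" "((\<lambda>j. inner (x (s j)) (x m)) \<circ> r) \<longlonglongrightarrow> l"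
      using bounded_imp_convergent_subsequence by blast
    then show "\<exists>r. strict_mono r \<and> convergent (\<lambda>j. inner (x ((s \<circ> r) j)) (x m))"
      by (auto simp: convergent_def o_def)
  qed
  have "convergent (\<lambda>j. inner (x (diagseq j)) (x m))" for m
  proof -
    have "convergent (\<lambda>j. inner (x ((diagseq \<circ> (+) (Suc m)) j)) (x m))"
      by (rule diagseq_holds) (auto simp: o_def dest: convergent_subseq_convergent)
    then show ?thesis
      using convergent_ignore_initial_segment[of "\<lambda>j. inner (x (diagseq j)) (x m)" "Suc m"]
      by (simp add: o_def add.commute)
  qed
  then show ?thesis using that subseq_diagseq by blast
qed

theorem bounded_seq_weak_conv_subseq:
  fixes x :: "nat \<Rightarrow> 'a::{real_inner,complete_space}"
  assumes "bounded (range x)"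
  obtains \<sigma> xb where "strict_mono \<sigma>" "weak_conv (x \<circ> \<sigma>) xb"
proof -
  obtain \<sigma> where "strict_mono \<sigma>" and \<sigma>_conv: "\<And>m. convergent (\<lambda>j. inner (x (\<sigma> j)) (x m))"
    using bounded_seq_diagonal_inner_convergent[OF assms] by blast
  define z where "z = x \<circ> \<sigma>"
  define V where "V = {y. convergent (\<lambda>j. inner (z j) y)}"
  have z_bounded: "bounded (range z)"
    using assms by (rule bounded_subset) (auto simp: z_def)
  have V: "subspace V" "closed V" "range z \<subseteq> V"
    using subspace_inner_convergent closed_inner_convergent[OF z_bounded] \<sigma>_conv
    by (auto simp: V_def z_def)
  obtain pb where pb: "\<And>n. pb \<in> closure (convex hull (z ` {n..}))"
    using tail_hulls_Inter_nonempty[OF z_bounded] by blast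
  have "closure (convex hull (z ` {0..})) \<subseteq> V"
    using V subspace_imp_convex by (intro closure_minimal hull_minimal) auto
  then have "pb \<in> V" using pb by blast
  \<comment> \<open>convergence against \<open>y \<notin> V\<close> reduces to its orthogonal projection onto \<open>V\<close>,
    since all \<open>z j\<close> and \<open>pb\<close> lie in \<open>V\<close>\<close>
  have lim_V: "(\<lambda>j. inner (z j) q) \<longlonglongrightarrow> inner pb q" if "q \<in> V" for q
    using that inner_eq_lim_if_in_tail_hulls[OF _ pb] by (auto simp: V_def convergent_LIMSEQ_iff)
  have "weak_conv z pb"
    unfolding weak_conv_def
  proof
    fix y
    obtain q where "q \<in> V" and orth: "\<And>v. v \<in> V \<Longrightarrow> inner (y - q) v = 0"
      using closed_subspace_orthogonal_decomposition[OF V(1,2)] by blast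
    have "inner v y = inner v q" if "v \<in> V" for v
    proof -
      have "inner v (y - q) = 0" using orth[OF that] by (simp add: inner_commute)
      then show ?thesis by (simp add: inner_diff_right)
    qed
    then have "inner (z j) y = inner (z j) q" "inner pb y = inner pb q" for j
      using V(3) \<open>pb \<in> V\<close> by auto
    then show "(\<lambda>j. inner (z j) y) \<longlonglongrightarrow> inner pb y"
      using lim_V[OF \<open>q \<in> V\<close>] by simp
  qed
  then show ?thesis using that \<open>strict_mono \<sigma>\<close> by (simp add: z_def)
qed

lemma LIMSEQ_if_subseqs_have_LIMSEQ_subseq:
  fixes X :: "nat \<Rightarrow> 'a::metric_space"
  assumes "\<And>r :: nat \<Rightarrow> nat. strict_mono r \<Longrightarrow> \<exists>s. strict_mono s \<and> (X \<circ> r \<circ> s) \<longlonglongrightarrow> l"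
  shows "X \<longlonglongrightarrow> l"
proof (rule ccontr)
  assume "\<not> X \<longlonglongrightarrow> l"
  then obtain e where "e > 0" and "\<not> eventually (\<lambda>n. dist (X n) l < e) sequentially"
    unfolding tendsto_iff by blast
  then obtain r :: "nat \<Rightarrow> nat" where "strict_mono r" and far: "\<And>n. \<not> dist (X (r n)) l < e"
    using not_eventually_sequentiallyD by blast
  then obtain s where "(X \<circ> r \<circ> s) \<longlonglongrightarrow> l" using assms[OF \<open>strict_mono r\<close>] by blast
  then have "eventually (\<lambda>n. dist (X (r (s n))) l < e) sequentially"
    using \<open>e > 0\<close> unfolding tendsto_iff by simp
  then show False using far by (auto simp: eventually_sequentially)
qed

lemma strongly_monotone_inj:
  assumes "strongly_monotone lam A"
  shows "inj A"
proof (rule injI)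
  fix x y assume "A x = A y"
  then have "lam * (norm (x - y))\<^sup>2 \<le> 0"
    using assms unfolding strongly_monotone_def by (metis diff_self inner_zero_left)
  then show "x = y" using assms by (simp add: strongly_monotone_def mult_le_0_iff)
qed

lemma Sol_shifted_inner_le:
  assumes "couple_monotone A F"
    and "x \<in> Sol A (\<lambda>z. F z + \<alpha> *\<^sub>R z) C" and "y \<in> Sol A (\<lambda>z. F z + \<beta> *\<^sub>R z) C"
  shows "\<alpha> * inner (A x - A y) x \<le> \<beta> * inner (A x - A y) y"
proof -
  have "0 \<le> inner (A x) ((F y + \<beta> *\<^sub>R y) - (F x + \<alpha> *\<^sub>R x))"
    and "0 \<le> inner (A y) ((F x + \<alpha> *\<^sub>R x) - (F y + \<beta> *\<^sub>R y))"
    using assms(2,3) by (auto simp: Sol_def)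
  moreover have "0 \<le> inner (A x - A y) (F x - F y)"
    using assms(1) by (simp add: couple_monotone_def)
  ultimately show ?thesis
    unfolding inner_diff_right inner_diff_left inner_add_right inner_scaleR_right right_diff_distrib
    by linarith
qed

lemma regularized_Sol_inner_le:
  assumes "couple_monotone A F" "\<alpha> > 0"
    and "x \<in> Sol A (\<lambda>z. F z + \<alpha> *\<^sub>R z) C" and "s \<in> Sol A F C"
  shows "inner (A x - A s) x \<le> 0"
  using Sol_shifted_inner_le[OF assms(1,3), of s 0] assms(2,4) by (simp add: mult_le_0_iff)

lemma le_divide_if_sq_le_mult:
  fixes t c lam :: real
  assumes "lam > 0" "c \<ge> 0" "lam * t\<^sup>2 \<le> c * t"
  shows "t \<le> c / lam"
proof (cases "t > 0")
  case True
  then have "lam * t \<le> c" using assms(3) by (simp add: power2_eq_square)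
  then show ?thesis using assms(1) by (simp add: field_simps)
next
  case False
  then show ?thesis using divide_nonneg_pos[OF assms(2,1)] by linarith
qed

lemma regularized_Sol_dist_le:
  assumes "strongly_monotone lam A" "L-lipschitz_on UNIV A" "couple_monotone A F" "\<alpha> > 0"
    and "x \<in> Sol A (\<lambda>z. F z + \<alpha> *\<^sub>R z) C" and "s \<in> Sol A F C"
  shows "norm (x - s) \<le> L * norm s / lam"
proof (rule le_divide_if_sq_le_mult)
  show "lam > 0" "L * norm s \<ge> 0"
    using assms(1,2) by (auto simp: strongly_monotone_def lipschitz_on_nonneg)
  have "lam * (norm (x - s))\<^sup>2 \<le> inner (A x - A s) (x - s)"
    using assms(1) by (simp add: strongly_monotone_def)
  also have "\<dots> \<le> - inner (A x - A s) s"
    using regularized_Sol_inner_le[OF assms(3-6)] by (simp add: inner_diff_right)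
  also have "\<dots> \<le> norm (A x - A s) * norm s"
    using Cauchy_Schwarz_ineq2[of "A x - A s" s] by linarith
  also have "\<dots> \<le> L * norm s * norm (x - s)"
    using mult_right_mono[OF lipschitz_on_normD[OF assms(2), of x s] norm_ge_zero[of s]]
    by (simp add: ac_simps)
  finally show "lam * (norm (x - s))\<^sup>2 \<le> L * norm s * norm (x - s)" .
qed

lemma regularized_Sol_norm_le:
  assumes "strongly_monotone lam A" "L-lipschitz_on UNIV A" "couple_monotone A F" "\<alpha> > 0"
    and "x \<in> Sol A (\<lambda>z. F z + \<alpha> *\<^sub>R z) C" and "s \<in> Sol A F C"
  shows "norm x \<le> (1 + L / lam) * norm s"
  using regularized_Sol_dist_le[OF assms] norm_triangle_ineq2[of x s]
  by (simp add: algebra_simps)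

lemma regularized_Sol_diff_le:
  assumes "strongly_monotone lam A" "L-lipschitz_on UNIV A" "couple_monotone A F" "\<beta> > 0"
    and "x \<in> Sol A (\<lambda>z. F z + \<alpha> *\<^sub>R z) C" and "y \<in> Sol A (\<lambda>z. F z + \<beta> *\<^sub>R z) C"
  shows "norm (x - y) \<le> L * norm x / lam * \<bar>\<alpha> - \<beta>\<bar> / \<beta>"
proof -
  define D where "D = A x - A y"
  have "(\<beta> * lam) * (norm (x - y))\<^sup>2 \<le> \<beta> * inner D (x - y)"
    using assms(1,4) by (simp add: strongly_monotone_def D_def)
  also have "\<dots> \<le> (\<beta> - \<alpha>) * inner D x"
    using Sol_shifted_inner_le[OF assms(3,5,6)]
    unfolding D_def[symmetric] inner_diff_right right_diff_distrib left_diff_distrib by linarith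
  also have "\<dots> \<le> \<bar>\<alpha> - \<beta>\<bar> * \<bar>inner D x\<bar>"
    by (metis abs_ge_self abs_minus_commute abs_mult)
  also have "\<dots> \<le> \<bar>\<alpha> - \<beta>\<bar> * (norm D * norm x)"
    by (rule mult_left_mono[OF Cauchy_Schwarz_ineq2 abs_ge_zero])
  also have "\<dots> \<le> \<bar>\<alpha> - \<beta>\<bar> * (L * norm (x - y) * norm x)"
    using mult_right_mono[OF lipschitz_on_normD[OF assms(2) UNIV_I UNIV_I, of x y]
        norm_ge_zero[of x]]
    unfolding D_def by (rule mult_left_mono[OF _ abs_ge_zero])
  also have "\<dots> = (\<bar>\<alpha> - \<beta>\<bar> * L * norm x) * norm (x - y)" by (simp only: ac_simps)
  finally have "norm (x - y) \<le> \<bar>\<alpha> - \<beta>\<bar> * L * norm x / (\<beta> * lam)"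
    using assms(1,2,4)
    by (intro le_divide_if_sq_le_mult) (auto simp: strongly_monotone_def lipschitz_on_nonneg)
  then show ?thesis by (simp add: field_simps)
qed

lemma regularized_Sol_weak_limit_in_Sol:
  fixes A F :: "'a::{real_inner,complete_space} \<Rightarrow> 'a"
  assumes "closed C" "convex C" "L-lipschitz_on UNIV A"
    and "seq_weak_weak_cont A" "seq_weak_weak_cont F" "couple_monotone A F"
    and "a \<longlonglongrightarrow> 0" "bounded (range x)" "\<And>k. x k \<in> Sol A (\<lambda>z. F z + a k *\<^sub>R z) C"
    and "weak_conv x xb"
  shows "xb \<in> Sol A F C"
proof -
  have wA: "weak_conv (\<lambda>k. A (x k)) (A xb)" and wF: "weak_conv (\<lambda>k. F (x k)) (F xb)"
    using assms(4,5,10) by (auto simp: seq_weak_weak_cont_def)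
  obtain R where R: "\<And>k. norm (x k) \<le> R"
    using assms(8) by (auto simp: bounded_iff)
  define B where "B = norm (A 0) + L * R"
  have AB: "norm (A (x k)) \<le> B" for k
    using norm_triangle_ineq2[of "A (x k)" "A 0"] lipschitz_on_normD[OF assms(3), of "x k" 0]
      mult_left_mono[OF R[of k] lipschitz_on_nonneg[OF assms(3)]]
    unfolding B_def by simp
  have shift_null: "(\<lambda>k. a k *\<^sub>R x k) \<longlonglongrightarrow> 0"
  proof (rule Lim_null_comparison)
    show "\<forall>\<^sub>F k in sequentially. norm (a k *\<^sub>R x k) \<le> \<bar>a k\<bar> * R"
      using R by (simp add: mult_left_mono)
    show "(\<lambda>k. \<bar>a k\<bar> * R) \<longlonglongrightarrow> 0"
      using tendsto_mult_left_zero[OF tendsto_rabs_zero[OF assms(7)]] .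
  qed
  have "F xb \<in> C"
  proof (rule weak_conv_closed_convex[OF assms(1,2)])
    show "F (x k) + a k *\<^sub>R x k \<in> C" for k using assms(9)[of k] by (simp add: Sol_def)
    show "weak_conv (\<lambda>k. F (x k) + a k *\<^sub>R x k) (F xb)"
      using weak_conv_add_null[OF wF shift_null] .
  qed
  moreover have "0 \<le> inner (A xb) (y - F xb)" if "y \<in> C" for y
  proof -
    \<comment> \<open>Minty's trick: monotonicity of the couple replaces the product of the two weakly
      convergent sequences \<open>A (x k)\<close>, \<open>F (x k)\<close> by products with fixed vectors\<close>
    define g where "g k = inner (A (x k)) y - inner (A (x k)) (a k *\<^sub>R x k)
      - inner (A (x k)) (F xb) - inner (F (x k)) (A xb) + inner (A xb) (F xb)" for k
    have "0 \<le> g k" for k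
    proof -
      have "0 \<le> inner (A (x k)) (y - (F (x k) + a k *\<^sub>R x k))"
        using assms(9)[of k] that by (simp add: Sol_def)
      moreover have "0 \<le> inner (A (x k) - A xb) (F (x k) - F xb)"
        using assms(6) by (simp add: couple_monotone_def)
      ultimately show ?thesis
        using inner_commute[of "A xb" "F (x k)"]
        unfolding g_def inner_diff_right inner_diff_left inner_add_right by linarith
    qed
    moreover have "(\<lambda>k. inner (A (x k)) (a k *\<^sub>R x k)) \<longlonglongrightarrow> 0"
    proof (rule Lim_null_comparison)
      have "norm (inner (A (x k)) (a k *\<^sub>R x k)) \<le> B * norm (a k *\<^sub>R x k)" for k
        using Cauchy_Schwarz_ineq2[of "A (x k)" "a k *\<^sub>R x k"] mult_right_mono[OF AB norm_ge_zero]
        unfolding real_norm_def by (rule order_trans)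
      then show "\<forall>\<^sub>F k in sequentially.
          norm (inner (A (x k)) (a k *\<^sub>R x k)) \<le> B * norm (a k *\<^sub>R x k)"
        by simp
      show "(\<lambda>k. B * norm (a k *\<^sub>R x k)) \<longlonglongrightarrow> 0"
        using tendsto_mult_right_zero[OF tendsto_norm_zero[OF shift_null]] .
    qed
    then have "g \<longlonglongrightarrow>
        inner (A xb) y - 0 - inner (A xb) (F xb) - inner (F xb) (A xb) + inner (A xb) (F xb)"
      unfolding g_def using wA wF unfolding weak_conv_def
      by (intro tendsto_add tendsto_diff tendsto_const) auto
    then have "g \<longlonglongrightarrow> inner (A xb) (y - F xb)"
      by (simp add: inner_diff_right inner_commute)
    ultimately show ?thesis
      by (intro LIMSEQ_le_const[of g]) auto
  qed
  ultimately show ?thesis by (simp add: Sol_def)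
qed

lemma regularized_Sol_tendsto_if_weak_limit:
  assumes "strongly_monotone lam A" "couple_monotone A F" "seq_weak_weak_cont A"
    and "\<And>k. a k > 0" "\<And>k. x k \<in> Sol A (\<lambda>z. F z + a k *\<^sub>R z) C" "weak_conv x xb"
    and "xd \<in> Sol A F C" "0 \<le> inner xd (A xb - A xd)"
  shows "x \<longlonglongrightarrow> xd"
proof -
  have "lam > 0" using assms(1) by (simp add: strongly_monotone_def)
  define h where "h k = (inner (A xd) xd - inner (A (x k)) xd) / lam" for k
  define h_lim where "h_lim = (inner (A xd) xd - inner (A xb) xd) / lam"
  have "(\<lambda>k. inner (A (x k)) xd) \<longlonglongrightarrow> inner (A xb) xd"
    using assms(3,6) unfolding seq_weak_weak_cont_def weak_conv_def by blast
  then have "h \<longlonglongrightarrow> h_lim"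
    unfolding h_def h_lim_def using \<open>lam > 0\<close>
    by (intro tendsto_divide tendsto_diff tendsto_const) auto
  moreover have "h_lim \<le> 0"
    using assms(8) \<open>lam > 0\<close> unfolding h_lim_def
    by (simp add: divide_nonpos_pos inner_diff_right inner_commute)
  ultimately have "(\<lambda>k. sqrt (max (h k) 0)) \<longlonglongrightarrow> 0"
    using tendsto_real_sqrt[OF tendsto_max[OF _ tendsto_const[of 0]], of h h_lim]
    by (simp add: max_absorb2)
  moreover have "norm (x k - xd) \<le> sqrt (max (h k) 0)" for k
  proof (rule real_le_rsqrt)
    have "lam * (norm (x k - xd))\<^sup>2 \<le> inner (A (x k) - A xd) (x k - xd)"
      using assms(1) by (simp add: strongly_monotone_def)
    also have "\<dots> \<le> - inner (A (x k) - A xd) xd"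
      using regularized_Sol_inner_le[OF assms(2,4,5,7)] by (simp add: inner_diff_right)
    also have "\<dots> = inner (A xd) xd - inner (A (x k)) xd"
      by (simp only: inner_diff_left minus_diff_eq)
    finally have "lam * (norm (x k - xd))\<^sup>2 \<le> inner (A xd) xd - inner (A (x k)) xd" .
    then have "(norm (x k - xd))\<^sup>2 \<le> h k"
      unfolding h_def pos_le_divide_eq[OF \<open>lam > 0\<close>] by (metis mult.commute)
    then show "(norm (x k - xd))\<^sup>2 \<le> max (h k) 0" by simp
  qed
  ultimately have "(\<lambda>k. norm (x k - xd)) \<longlonglongrightarrow> 0"
    using tendsto_sandwich[of "\<lambda>_. 0" "\<lambda>k. norm (x k - xd)" sequentially "\<lambda>k. sqrt (max (h k) 0)"]
    by auto
  then show ?thesis by (rule LIM_zero_cancel[OF tendsto_norm_zero_cancel])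
qed

lemma regularized_Sol_seq_tendsto:
  fixes A F :: "'a::{real_inner,complete_space} \<Rightarrow> 'a"
  assumes "closed C" "convex C" "strongly_monotone lam A" "L-lipschitz_on UNIV A"
    and "seq_weak_weak_cont A" "seq_weak_weak_cont F" "couple_monotone A F"
    and "xd \<in> Sol A F C" "\<And>s. s \<in> Sol A F C \<Longrightarrow> 0 \<le> inner xd (A s - A xd)"
    and "\<And>k. a k > 0" "a \<longlonglongrightarrow> 0" "\<And>k. x k \<in> Sol A (\<lambda>z. F z + a k *\<^sub>R z) C"
  shows "x \<longlonglongrightarrow> xd"
proof (rule LIMSEQ_if_subseqs_have_LIMSEQ_subseq)
  fix r :: "nat \<Rightarrow> nat" assume "strict_mono r"
  have "norm (x k) \<le> (1 + L / lam) * norm xd" for k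
    using regularized_Sol_norm_le[OF assms(3,4,7,10,12,8)] .
  then have bounded: "bounded (range (x \<circ> q))" for q :: "nat \<Rightarrow> nat"
    unfolding bounded_iff by auto
  obtain s xb where "strict_mono s" and weak: "weak_conv (x \<circ> r \<circ> s) xb"
    using bounded_seq_weak_conv_subseq[OF bounded[of r]] by blast
  have "(a \<circ> r \<circ> s) \<longlonglongrightarrow> 0"
    using LIMSEQ_subseq_LIMSEQ[OF LIMSEQ_subseq_LIMSEQ[OF assms(11) \<open>strict_mono r\<close>]
        \<open>strict_mono s\<close>] .
  then have "xb \<in> Sol A F C"
    using regularized_Sol_weak_limit_in_Sol[OF assms(1,2,4,5,6,7), of "a \<circ> r \<circ> s" "x \<circ> r \<circ> s"]
      bounded[of "r \<circ> s"] assms(12) weak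
    by (simp add: comp_assoc)
  then have "(x \<circ> r \<circ> s) \<longlonglongrightarrow> xd"
    by (intro regularized_Sol_tendsto_if_weak_limit[OF assms(3,7,5) _ _ weak assms(8) assms(9),
          where a="a \<circ> r \<circ> s"]) (simp_all add: assms(10,12))
  then show "\<exists>s. strict_mono s \<and> (x \<circ> r \<circ> s) \<longlonglongrightarrow> xd" using \<open>strict_mono s\<close> by blast
qed

lemma regularized_Sol_tendsto_at_right:
  fixes A F :: "'a::{real_inner,complete_space} \<Rightarrow> 'a"
  assumes "closed C" "convex C" "strongly_monotone lam A" "L-lipschitz_on UNIV A"
    and "seq_weak_weak_cont A" "seq_weak_weak_cont F" "couple_monotone A F"
    and "xd \<in> Sol A F C" "\<And>s. s \<in> Sol A F C \<Longrightarrow> 0 \<le> inner xd (A s - A xd)"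
    and "\<And>\<alpha>. \<alpha> > 0 \<Longrightarrow> x \<alpha> \<in> Sol A (\<lambda>z. F z + \<alpha> *\<^sub>R z) C"
  shows "(x \<longlongrightarrow> xd) (at_right 0)"
proof (rule tendsto_at_right_sequentially[OF zero_less_one])
  fix a :: "nat \<Rightarrow> real" assume a: "\<And>n. 0 < a n" "a \<longlonglongrightarrow> 0"
  with assms(9,10) show "(\<lambda>n. x (a n)) \<longlonglongrightarrow> xd"
    by (intro regularized_Sol_seq_tendsto[OF assms(1-8) _ a]) auto
qed

lemma regularized_Sol_stability:
  assumes "strongly_monotone lam A" "L-lipschitz_on UNIV A" "couple_monotone A F"
    and "\<And>\<alpha>. \<alpha> > 0 \<Longrightarrow> x \<alpha> \<in> Sol A (\<lambda>z. F z + \<alpha> *\<^sub>R z) C" and "s \<in> Sol A F C"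
  shows "\<exists>M>0. \<forall>\<alpha>>0. \<forall>\<beta>>0. norm (x \<alpha> - x \<beta>) \<le> M * \<bar>\<alpha> - \<beta>\<bar> / \<beta>"
proof -
  define R where "R = (1 + L / lam) * norm s"
  have "L \<ge> 0" "lam > 0"
    using assms(1,2) by (auto simp: lipschitz_on_nonneg strongly_monotone_def)
  have R: "norm (x \<alpha>) \<le> R" if "\<alpha> > 0" for \<alpha>
    unfolding R_def using regularized_Sol_norm_le[OF assms(1-3) that assms(4)[OF that] assms(5)] .
  have "R \<ge> 0" using order_trans[OF norm_ge_zero R[OF zero_less_one]] .
  show ?thesis
  proof (intro exI[of _ "L * R / lam + 1"] conjI allI impI)
    show "L * R / lam + 1 > 0"
      using \<open>L \<ge> 0\<close> \<open>lam > 0\<close> \<open>R \<ge> 0\<close>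
      by (intro add_nonneg_pos divide_nonneg_pos mult_nonneg_nonneg) auto
    fix \<alpha> \<beta> :: real assume "\<alpha> > 0" "\<beta> > 0"
    have "norm (x \<alpha> - x \<beta>) \<le> L * norm (x \<alpha>) / lam * \<bar>\<alpha> - \<beta>\<bar> / \<beta>"
      using regularized_Sol_diff_le[OF assms(1-3) \<open>\<beta> > 0\<close>
          assms(4)[OF \<open>\<alpha> > 0\<close>] assms(4)[OF \<open>\<beta> > 0\<close>]] .
    also have "\<dots> \<le> (L * R / lam + 1) * \<bar>\<alpha> - \<beta>\<bar> / \<beta>"
    proof -
      have "L * norm (x \<alpha>) / lam \<le> L * R / lam"
        using mult_left_mono[OF R[OF \<open>\<alpha> > 0\<close>] \<open>L \<ge> 0\<close>] \<open>lam > 0\<close>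
        by (rule divide_right_mono[OF _ less_imp_le])
      then show ?thesis
        using \<open>\<beta> > 0\<close> by (intro divide_right_mono mult_right_mono) auto
    qed
    finally show "norm (x \<alpha> - x \<beta>) \<le> (L * R / lam + 1) * \<bar>\<alpha> - \<beta>\<bar> / \<beta>" .
  qed
qed

theorem lemma3p2:
  fixes A F :: "'a::{real_inner, complete_space} \<Rightarrow> 'a"
    and C :: "'a set"
    and lam LA LF :: real
    and u_dag :: 'a
    and x_a :: "real \<Rightarrow> 'a"
  assumes C_ne: "C \<noteq> {}" and C_closed: "closed C" and C_convex: "convex C"
    and A1_sm: "strongly_monotone lam A"
    and A1_LA: "LA-lipschitz_on UNIV A"
    and A1_LF: "LF-lipschitz_on UNIV F"
    and A1_wA: "seq_weak_weak_cont A"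
    and A1_wF: "seq_weak_weak_cont F"
    and A2: "couple_monotone A F"
    and A3_ne: "Sol A F C \<noteq> {}"
    and A3_cvx: "convex (A ` Sol A F C)"
    and u_dag_mem: "u_dag \<in> A ` Sol A F C"
    and u_dag_vi: "\<forall>v \<in> A ` Sol A F C. inner (inv A u_dag) (v - u_dag) \<ge> 0"
    and x_a_sol: "\<forall>\<alpha>>0. x_a \<alpha> \<in> Sol A (\<lambda>x. F x + \<alpha> *\<^sub>R x) C"
  shows "bounded (x_a ` {0<..})
    \<and> ((x_a \<longlongrightarrow> inv A u_dag) (at_right 0) \<and> inv A u_dag \<in> Sol A F C)
    \<and> (\<exists>M>0. \<forall>\<alpha>>0. \<forall>\<beta>>0. norm (x_a \<alpha> - x_a \<beta>) \<le> M * \<bar>\<alpha> - \<beta>\<bar> / \<beta>)"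
proof -
  \<comment> \<open>\<open>C_ne\<close> and \<open>A3_ne\<close> follow from \<open>u_dag_mem\<close>; \<open>A1_LF\<close> and \<open>A3_cvx\<close> serve only the
    existence of \<open>u_dag\<close> and \<open>x_a\<close>, which is assumed here\<close>
  obtain xd where xd: "xd \<in> Sol A F C" "u_dag = A xd" using u_dag_mem by blast
  then have inv_u_dag: "inv A u_dag = xd" using strongly_monotone_inj[OF A1_sm] by simp
  have xd_min: "0 \<le> inner xd (A s - A xd)" if "s \<in> Sol A F C" for s
    using u_dag_vi that xd(2) inv_u_dag by auto
  have x_a: "x_a \<alpha> \<in> Sol A (\<lambda>z. F z + \<alpha> *\<^sub>R z) C" if "\<alpha> > 0" for \<alpha>
    using x_a_sol that by blast
  have "norm (x_a \<alpha>) \<le> (1 + LA / lam) * norm xd" if "\<alpha> > 0" for \<alpha>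
    using regularized_Sol_norm_le[OF A1_sm A1_LA A2 that x_a[OF that] xd(1)] .
  then have "bounded (x_a ` {0<..})"
    unfolding bounded_iff by auto
  moreover have "(x_a \<longlongrightarrow> xd) (at_right 0)"
    using regularized_Sol_tendsto_at_right[OF C_closed C_convex A1_sm A1_LA A1_wA A1_wF A2 xd(1)
        xd_min x_a] .
  moreover have "\<exists>M>0. \<forall>\<alpha>>0. \<forall>\<beta>>0. norm (x_a \<alpha> - x_a \<beta>) \<le> M * \<bar>\<alpha> - \<beta>\<bar> / \<beta>"
    using regularized_Sol_stability[OF A1_sm A1_LA A2 x_a xd(1)] .
  ultimately show ?thesis using inv_u_dag xd(1) by blast
qed

end
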